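(* Let $A$ be an associative algebra, $M$ an $A$-bimodule, $H:A\otimes A\to M$ a Hochschild $2$-cocycle, and $\{ T_\alpha : M \to A \}_{\alpha \in \Omega}$ an $H$-twisted $\mathcal{O}$-operator family. Define on $M$ the operations $u \ast_{\alpha, \beta} v = T_\alpha (u) \cdot v + u \cdot T_\beta (v) + H (T_\alpha (u), T_\beta (v))$, and define bilinear maps $\triangleright_{\alpha,\beta}: M\otimes A\to A$, $\triangleleft_{\alpha,\beta}: A\otimes M\to A$ by $$u \triangleright_{\alpha, \beta} a := T_\alpha (u) \cdot a - T_{\alpha \beta} (u \cdot a) - T_{\alpha \beta} \big( H (T_\alpha (u), a) \big),\qquad a \triangleleft_{\alpha, \beta} u := a \cdot T_\beta (u) - T_{\alpha \beta} (a \cdot u) - T_{\alpha \beta} \big( H (a, T_\beta (u)) \big).$$ Then $(M,\{\ast_{\alpha,\beta}\}_{\alpha,\beta\in\Omega})$ is an $\Omega$-associative algebra and $(A, \{ \triangleright_{\alpha, \beta}, \triangleleft_{\alpha, \beta} \}_{\alpha, \beta \in \Omega})$ is a bimodule over it (with $\triangleright$ the left action and $\triangleleft$ the right action).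
   Context: $\Omega$ is a semigroup. A Hochschild $2$-cocycle is a bilinear $H$ with $a \cdot H (b, c) - H ( a \cdot b, c)+ H (a, b \cdot c) - H (a, b) \cdot c =0$. An $H$-twisted $\mathcal{O}$-operator family: linear maps $T_\alpha:M\to A$ with $T_\alpha (u) \cdot T_\beta (v) = T_{\alpha \beta} \big( T_\alpha (u) \cdot v + u \cdot T_\beta (v) + H (T_\alpha (u), T_\beta (v)) \big)$ for all $u,v,\alpha,\beta$. An $\Omega$-associative algebra is a vector space $B$ with bilinear maps $\{\cdot_{\alpha,\beta}\}_{\alpha,\beta\in\Omega}$ with $(a \cdot_{\alpha , \beta} b) \cdot_{\alpha \beta, \gamma} c = a \cdot_{\alpha, \beta \gamma} (b \cdot_{\beta, \gamma} c)$ for all $a,b,c$, $\alpha,\beta,\gamma$. A bimodule over it is a vector space $N$ with bilinear maps $B\otimes N\to N$, $(a,n)\mapsto a\cdot_{\alpha,\beta}n$ and $N\otimes B\to N$, $(n,a)\mapsto n\cdot_{\alpha,\beta}a$ ($\alpha,\beta\in\Omega$) such that $(a \cdot_{\alpha , \beta} b) \cdot_{\alpha \beta, \gamma} n = a \cdot_{\alpha, \beta \gamma} (b \cdot_{\beta, \gamma} n)$, $(a \cdot_{\alpha , \beta} n) \cdot_{\alpha \beta, \gamma} b = a \cdot_{\alpha, \beta \gamma} (n \cdot_{\beta, \gamma} b)$, $(n \cdot_{\alpha , \beta} a) \cdot_{\alpha \beta, \gamma} b = n \cdot_{\alpha, \beta \gamma} (a \cdot_{\beta, \gamma} b)$. 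*)

theory Defs
  imports Main "HOL.Vector_Spaces"
begin

text \<open>Vector spaces over a field 'k are given by scalar multiplications
  (library locale vector_space); linearity is the library predicate linear.\<close>

definition bilinear_map ::
  "('k::field \<Rightarrow> 'x::ab_group_add \<Rightarrow> 'x) \<Rightarrow> ('k \<Rightarrow> 'y::ab_group_add \<Rightarrow> 'y) \<Rightarrow>
   ('k \<Rightarrow> 'z::ab_group_add \<Rightarrow> 'z) \<Rightarrow> ('x \<Rightarrow> 'y \<Rightarrow> 'z) \<Rightarrow> bool" where
  "bilinear_map sX sY sZ f \<longleftrightarrow>
     (\<forall>x. Vector_Spaces.linear sY sZ (f x)) \<and> (\<forall>y. Vector_Spaces.linear sX sZ (\<lambda>x. f x y))"

definition assoc_algebra ::
  "('k::field \<Rightarrow> 'a::ab_group_add \<Rightarrow> 'a) \<Rightarrow> ('a \<Rightarrow> 'a \<Rightarrow> 'a) \<Rightarrow> bool" where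
  "assoc_algebra sA mA \<longleftrightarrow> vector_space sA \<and> bilinear_map sA sA sA mA \<and>
     (\<forall>a b c. mA (mA a b) c = mA a (mA b c))"

definition alg_bimodule ::
  "('k::field \<Rightarrow> 'a::ab_group_add \<Rightarrow> 'a) \<Rightarrow> ('a \<Rightarrow> 'a \<Rightarrow> 'a) \<Rightarrow>
   ('k \<Rightarrow> 'm::ab_group_add \<Rightarrow> 'm) \<Rightarrow> ('a \<Rightarrow> 'm \<Rightarrow> 'm) \<Rightarrow> ('m \<Rightarrow> 'a \<Rightarrow> 'm) \<Rightarrow> bool" where
  "alg_bimodule sA mA sM lM rM \<longleftrightarrow> vector_space sM \<and>
     bilinear_map sA sM sM lM \<and> bilinear_map sM sA sM rM \<and>
     (\<forall>a b u. lM (mA a b) u = lM a (lM b u)) \<and>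
     (\<forall>a u b. rM (lM a u) b = lM a (rM u b)) \<and>
     (\<forall>u a b. rM (rM u a) b = rM u (mA a b))"

definition hochschild_2cocycle ::
  "('k::field \<Rightarrow> 'a::ab_group_add \<Rightarrow> 'a) \<Rightarrow> ('a \<Rightarrow> 'a \<Rightarrow> 'a) \<Rightarrow>
   ('k \<Rightarrow> 'm::ab_group_add \<Rightarrow> 'm) \<Rightarrow> ('a \<Rightarrow> 'm \<Rightarrow> 'm) \<Rightarrow> ('m \<Rightarrow> 'a \<Rightarrow> 'm) \<Rightarrow>
   ('a \<Rightarrow> 'a \<Rightarrow> 'm) \<Rightarrow> bool" where
  "hochschild_2cocycle sA mA sM lM rM H \<longleftrightarrow> bilinear_map sA sA sM H \<and>
     (\<forall>a b c. lM a (H b c) - H (mA a b) c + H a (mA b c) - rM (H a b) c = 0)"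

definition twisted_O_operator_family ::
  "('k::field \<Rightarrow> 'a::ab_group_add \<Rightarrow> 'a) \<Rightarrow> ('a \<Rightarrow> 'a \<Rightarrow> 'a) \<Rightarrow>
   ('k \<Rightarrow> 'm::ab_group_add \<Rightarrow> 'm) \<Rightarrow> ('a \<Rightarrow> 'm \<Rightarrow> 'm) \<Rightarrow> ('m \<Rightarrow> 'a \<Rightarrow> 'm) \<Rightarrow>
   ('a \<Rightarrow> 'a \<Rightarrow> 'm) \<Rightarrow> ('o::semigroup_mult \<Rightarrow> 'm \<Rightarrow> 'a) \<Rightarrow> bool" where
  "twisted_O_operator_family sA mA sM lM rM H T \<longleftrightarrow>
     (\<forall>\<alpha>. Vector_Spaces.linear sM sA (T \<alpha>)) \<and>
     (\<forall>\<alpha> \<beta> u v. mA (T \<alpha> u) (T \<beta> v) =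
        T (\<alpha> * \<beta>) (lM (T \<alpha> u) v + rM u (T \<beta> v) + H (T \<alpha> u) (T \<beta> v)))"

definition omega_assoc_algebra ::
  "('k::field \<Rightarrow> 'b::ab_group_add \<Rightarrow> 'b) \<Rightarrow> ('o::semigroup_mult \<Rightarrow> 'o \<Rightarrow> 'b \<Rightarrow> 'b \<Rightarrow> 'b) \<Rightarrow> bool" where
  "omega_assoc_algebra sB m \<longleftrightarrow> vector_space sB \<and>
     (\<forall>\<alpha> \<beta>. bilinear_map sB sB sB (m \<alpha> \<beta>)) \<and>
     (\<forall>a b c \<alpha> \<beta> \<gamma>. m (\<alpha> * \<beta>) \<gamma> (m \<alpha> \<beta> a b) c = m \<alpha> (\<beta> * \<gamma>) a (m \<beta> \<gamma> b c))"

definition omega_bimodule ::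
  "('k::field \<Rightarrow> 'b::ab_group_add \<Rightarrow> 'b) \<Rightarrow> ('o::semigroup_mult \<Rightarrow> 'o \<Rightarrow> 'b \<Rightarrow> 'b \<Rightarrow> 'b) \<Rightarrow>
   ('k \<Rightarrow> 'n::ab_group_add \<Rightarrow> 'n) \<Rightarrow> ('o \<Rightarrow> 'o \<Rightarrow> 'b \<Rightarrow> 'n \<Rightarrow> 'n) \<Rightarrow>
   ('o \<Rightarrow> 'o \<Rightarrow> 'n \<Rightarrow> 'b \<Rightarrow> 'n) \<Rightarrow> bool" where
  "omega_bimodule sB m sN l r \<longleftrightarrow> vector_space sN \<and>
     (\<forall>\<alpha> \<beta>. bilinear_map sB sN sN (l \<alpha> \<beta>)) \<and>
     (\<forall>\<alpha> \<beta>. bilinear_map sN sB sN (r \<alpha> \<beta>)) \<and>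
     (\<forall>a b n \<alpha> \<beta> \<gamma>. l (\<alpha> * \<beta>) \<gamma> (m \<alpha> \<beta> a b) n = l \<alpha> (\<beta> * \<gamma>) a (l \<beta> \<gamma> b n)) \<and>
     (\<forall>a n b \<alpha> \<beta> \<gamma>. r (\<alpha> * \<beta>) \<gamma> (l \<alpha> \<beta> a n) b = l \<alpha> (\<beta> * \<gamma>) a (r \<beta> \<gamma> n b)) \<and>
     (\<forall>n a b \<alpha> \<beta> \<gamma>. r (\<alpha> * \<beta>) \<gamma> (r \<alpha> \<beta> n a) b = r \<alpha> (\<beta> * \<gamma>) n (m \<beta> \<gamma> a b))"

end

(*
  The cocycle condition on H says exactly that A \<oplus> M with the product
  (a, u) (b, v) = (a b, a v + u b + H a b) is associative. The twisted O-operator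
  identity says that the graphs of the T \<alpha> multiply into each other:
  (T \<alpha> u, u) (T \<beta> v, v) = (T (\<alpha> \<beta>) (u * v), u * v), so the products * inherit
  associativity. Splitting A \<oplus> M as (A, 0) plus the graph of T \<gamma>, with projection
  (a, u) \<mapsto> a - T \<gamma> u onto A, the actions are u \<rhd> a = proj ((T \<alpha> u, u) (a, 0)) and
  a \<lhd> u = proj ((a, 0) (T \<beta> u, u)) for \<gamma> = \<alpha> \<beta>. This projection kills the graph part
  of a product, so every bimodule axiom is again associativity of A \<oplus> M.
*)

theory Submission
  imports Defs "HOL-Library.Product_Plus"
begin

lemma linear_simps:
  assumes "Vector_Spaces.linear s1 s2 f"
  shows "f (x + y) = f x + f y" and "f (x - y) = f x - f y" and "f 0 = 0"
    and "f (s1 c x) = s2 c (f x)"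
  using assms unfolding module_hom_iff_linear[symmetric]
  by (simp_all add: module_hom.add module_hom.diff module_hom.scale module_hom.zero)

lemma bilinear_map_simps:
  assumes "bilinear_map sX sY sZ f"
  shows "f (x + x') y = f x y + f x' y" and "f (x - x') y = f x y - f x' y"
    and "f 0 y = 0" and "f (sX c x) y = sZ c (f x y)"
    and "f x (y + y') = f x y + f x y'" and "f x (y - y') = f x y - f x y'"
    and "f x 0 = 0" and "f x (sY c y) = sZ c (f x y)"
  using assms linear_simps[of sX sZ "\<lambda>x. f x y"] linear_simps[of sY sZ "f x"]
  unfolding bilinear_map_def by auto

locale hochschild_extension =
  fixes sA :: "'k::field \<Rightarrow> 'a::ab_group_add \<Rightarrow> 'a"
    and mA :: "'a \<Rightarrow> 'a \<Rightarrow> 'a"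
    and sM :: "'k \<Rightarrow> 'm::ab_group_add \<Rightarrow> 'm"
    and lM :: "'a \<Rightarrow> 'm \<Rightarrow> 'm"
    and rM :: "'m \<Rightarrow> 'a \<Rightarrow> 'm"
    and H :: "'a \<Rightarrow> 'a \<Rightarrow> 'm"
  assumes algebra: "assoc_algebra sA mA"
    and bimodule: "alg_bimodule sA mA sM lM rM"
    and cocycle: "hochschild_2cocycle sA mA sM lM rM H"
begin

sublocale A: vector_space sA
  using algebra by (simp add: assoc_algebra_def)

sublocale M: vector_space sM
  using bimodule by (simp add: alg_bimodule_def)

lemma mA_assoc: "mA (mA a b) c = mA a (mA b c)"
  using algebra by (simp add: assoc_algebra_def)

lemma lM_mA: "lM (mA a b) u = lM a (lM b u)"
  and rM_lM: "rM (lM a u) b = lM a (rM u b)"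
  and rM_mA: "rM (rM u a) b = rM u (mA a b)"
  using bimodule by (simp_all add: alg_bimodule_def)

lemma H_mA_left: "H (mA a b) c = lM a (H b c) + H a (mA b c) - rM (H a b) c"
  using cocycle by (simp add: hochschild_2cocycle_def algebra_simps)

lemma mA_bilinear: "bilinear_map sA sA sA mA"
  using algebra by (simp add: assoc_algebra_def)

lemma lM_bilinear: "bilinear_map sA sM sM lM"
  and rM_bilinear: "bilinear_map sM sA sM rM"
  using bimodule by (simp_all add: alg_bimodule_def)

lemma H_bilinear: "bilinear_map sA sA sM H"
  using cocycle by (simp add: hochschild_2cocycle_def)

lemmas bilinear_simps =
  bilinear_map_simps[OF mA_bilinear] bilinear_map_simps[OF lM_bilinear]
  bilinear_map_simps[OF rM_bilinear] bilinear_map_simps[OF H_bilinear]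

definition ext_mult :: "'a \<times> 'm \<Rightarrow> 'a \<times> 'm \<Rightarrow> 'a \<times> 'm" (infixl \<open>\<odot>\<close> 70) where
  "p \<odot> q = (mA (fst p) (fst q), lM (fst p) (snd q) + rM (snd p) (fst q) + H (fst p) (fst q))"

lemma ext_mult_assoc: "(p \<odot> q) \<odot> r = p \<odot> (q \<odot> r)"
  by (simp add: ext_mult_def bilinear_simps mA_assoc lM_mA rM_lM rM_mA H_mA_left algebra_simps)

lemma ext_mult_add_left: "(p + q) \<odot> r = p \<odot> r + q \<odot> r"
  and ext_mult_add_right: "p \<odot> (q + r) = p \<odot> q + p \<odot> r"
  by (simp_all add: ext_mult_def bilinear_simps algebra_simps)

end

locale twisted_O_family = hochschild_extension sA mA sM lM rM H
  for sA :: "'k::field \<Rightarrow> 'a::ab_group_add \<Rightarrow> 'a" and mA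
    and sM :: "'k \<Rightarrow> 'm::ab_group_add \<Rightarrow> 'm" and lM rM H +
  fixes T :: "'o::semigroup_mult \<Rightarrow> 'm \<Rightarrow> 'a"
  assumes O_family: "twisted_O_operator_family sA mA sM lM rM H T"
begin

lemma T_linear: "Vector_Spaces.linear sM sA (T \<alpha>)"
  using O_family by (simp add: twisted_O_operator_family_def)

lemmas T_simps = linear_simps[OF T_linear]

definition O_mult :: "'o \<Rightarrow> 'o \<Rightarrow> 'm \<Rightarrow> 'm \<Rightarrow> 'm" where
  "O_mult \<alpha> \<beta> u v = lM (T \<alpha> u) v + rM u (T \<beta> v) + H (T \<alpha> u) (T \<beta> v)"

definition O_act_left :: "'o \<Rightarrow> 'o \<Rightarrow> 'm \<Rightarrow> 'a \<Rightarrow> 'a" where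
  "O_act_left \<alpha> \<beta> u a = mA (T \<alpha> u) a - T (\<alpha> * \<beta>) (rM u a) - T (\<alpha> * \<beta>) (H (T \<alpha> u) a)"

definition O_act_right :: "'o \<Rightarrow> 'o \<Rightarrow> 'a \<Rightarrow> 'm \<Rightarrow> 'a" where
  "O_act_right \<alpha> \<beta> a u = mA a (T \<beta> u) - T (\<alpha> * \<beta>) (lM a u) - T (\<alpha> * \<beta>) (H a (T \<beta> u))"

lemma T_O_mult: "T (\<alpha> * \<beta>) (O_mult \<alpha> \<beta> u v) = mA (T \<alpha> u) (T \<beta> v)"
  using O_family by (simp add: twisted_O_operator_family_def O_mult_def)

definition graph :: "'o \<Rightarrow> 'm \<Rightarrow> 'a \<times> 'm" where
  "graph \<gamma> u = (T \<gamma> u, u)"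

definition graph_proj :: "'o \<Rightarrow> 'a \<times> 'm \<Rightarrow> 'a" where
  "graph_proj \<gamma> p = fst p - T \<gamma> (snd p)"

lemma graph_mult_graph: "graph \<alpha> u \<odot> graph \<beta> v = graph (\<alpha> * \<beta>) (O_mult \<alpha> \<beta> u v)"
  by (simp add: graph_def ext_mult_def T_O_mult O_mult_def[symmetric])

lemma graph_proj_graph: "graph_proj \<gamma> (graph \<gamma> u) = 0"
  by (simp add: graph_proj_def graph_def)

lemma graph_proj_add: "graph_proj \<gamma> (p + q) = graph_proj \<gamma> p + graph_proj \<gamma> q"
  by (simp add: graph_proj_def T_simps)

lemma graph_decomp: "p = (graph_proj \<gamma> p, 0) + graph \<gamma> (snd p)"
  by (simp add: graph_proj_def graph_def)

lemma O_act_left_eq_graph_proj: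
  "O_act_left \<alpha> \<beta> u a = graph_proj (\<alpha> * \<beta>) (graph \<alpha> u \<odot> (a, 0))"
  by (simp add: O_act_left_def graph_proj_def graph_def ext_mult_def bilinear_simps T_simps)

lemma O_act_right_eq_graph_proj:
  "O_act_right \<alpha> \<beta> a u = graph_proj (\<alpha> * \<beta>) ((a, 0) \<odot> graph \<beta> u)"
  by (simp add: O_act_right_def graph_proj_def graph_def ext_mult_def bilinear_simps T_simps
      algebra_simps)

lemma graph_proj_graph_mult:
  "graph_proj (\<alpha> * \<gamma>) (graph \<alpha> u \<odot> p)
    = graph_proj (\<alpha> * \<gamma>) (graph \<alpha> u \<odot> (graph_proj \<gamma> p, 0))"
proof -
  have "graph \<alpha> u \<odot> p
      = graph \<alpha> u \<odot> (graph_proj \<gamma> p, 0) + graph (\<alpha> * \<gamma>) (O_mult \<alpha> \<gamma> u (snd p))"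
    by (subst graph_decomp[of p \<gamma>]) (simp only: ext_mult_add_right graph_mult_graph)
  then show ?thesis
    by (simp add: graph_proj_add graph_proj_graph)
qed

lemma graph_proj_mult_graph:
  "graph_proj (\<gamma> * \<beta>) (p \<odot> graph \<beta> u)
    = graph_proj (\<gamma> * \<beta>) ((graph_proj \<gamma> p, 0) \<odot> graph \<beta> u)"
proof -
  have "p \<odot> graph \<beta> u
      = (graph_proj \<gamma> p, 0) \<odot> graph \<beta> u + graph (\<gamma> * \<beta>) (O_mult \<gamma> \<beta> (snd p) u)"
    by (subst graph_decomp[of p \<gamma>]) (simp only: ext_mult_add_left graph_mult_graph)
  then show ?thesis
    by (simp add: graph_proj_add graph_proj_graph)
qed

lemma O_mult_assoc:
  "O_mult (\<alpha> * \<beta>) \<gamma> (O_mult \<alpha> \<beta> u v) w = O_mult \<alpha> (\<beta> * \<gamma>) u (O_mult \<beta> \<gamma> v w)"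
proof -
  have "graph (\<alpha> * \<beta> * \<gamma>) (O_mult (\<alpha> * \<beta>) \<gamma> (O_mult \<alpha> \<beta> u v) w)
      = graph (\<alpha> * (\<beta> * \<gamma>)) (O_mult \<alpha> (\<beta> * \<gamma>) u (O_mult \<beta> \<gamma> v w))"
    by (simp only: graph_mult_graph[symmetric] ext_mult_assoc)
  then show ?thesis
    by (simp add: graph_def)
qed

lemma O_act_left_O_mult:
  "O_act_left (\<alpha> * \<beta>) \<gamma> (O_mult \<alpha> \<beta> u v) a = O_act_left \<alpha> (\<beta> * \<gamma>) u (O_act_left \<beta> \<gamma> v a)"
proof -
  have "O_act_left (\<alpha> * \<beta>) \<gamma> (O_mult \<alpha> \<beta> u v) a
      = graph_proj (\<alpha> * (\<beta> * \<gamma>)) (graph \<alpha> u \<odot> (graph \<beta> v \<odot> (a, 0)))"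
    by (simp only: O_act_left_eq_graph_proj graph_mult_graph[symmetric] ext_mult_assoc mult.assoc)
  also have "\<dots> = graph_proj (\<alpha> * (\<beta> * \<gamma>)) (graph \<alpha> u \<odot> (O_act_left \<beta> \<gamma> v a, 0))"
    by (simp only: O_act_left_eq_graph_proj graph_proj_graph_mult[symmetric])
  finally show ?thesis
    by (simp only: O_act_left_eq_graph_proj)
qed

lemma O_act_right_O_act_left:
  "O_act_right (\<alpha> * \<beta>) \<gamma> (O_act_left \<alpha> \<beta> u a) v = O_act_left \<alpha> (\<beta> * \<gamma>) u (O_act_right \<beta> \<gamma> a v)"
proof -
  have "O_act_right (\<alpha> * \<beta>) \<gamma> (O_act_left \<alpha> \<beta> u a) v
      = graph_proj (\<alpha> * \<beta> * \<gamma>) ((graph \<alpha> u \<odot> (a, 0)) \<odot> graph \<gamma> v)"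
    by (simp only: O_act_left_eq_graph_proj O_act_right_eq_graph_proj graph_proj_mult_graph[symmetric])
  also have "\<dots> = graph_proj (\<alpha> * (\<beta> * \<gamma>)) (graph \<alpha> u \<odot> ((a, 0) \<odot> graph \<gamma> v))"
    by (simp only: ext_mult_assoc mult.assoc)
  also have "\<dots> = graph_proj (\<alpha> * (\<beta> * \<gamma>)) (graph \<alpha> u \<odot> (O_act_right \<beta> \<gamma> a v, 0))"
    by (simp only: O_act_right_eq_graph_proj graph_proj_graph_mult[symmetric])
  finally show ?thesis
    by (simp only: O_act_left_eq_graph_proj)
qed

lemma O_act_right_O_mult:
  "O_act_right (\<alpha> * \<beta>) \<gamma> (O_act_right \<alpha> \<beta> a u) v = O_act_right \<alpha> (\<beta> * \<gamma>) a (O_mult \<beta> \<gamma> u v)"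
proof -
  have "O_act_right (\<alpha> * \<beta>) \<gamma> (O_act_right \<alpha> \<beta> a u) v
      = graph_proj (\<alpha> * \<beta> * \<gamma>) (((a, 0) \<odot> graph \<beta> u) \<odot> graph \<gamma> v)"
    by (simp only: O_act_right_eq_graph_proj graph_proj_mult_graph[symmetric])
  also have "\<dots> = graph_proj (\<alpha> * (\<beta> * \<gamma>)) ((a, 0) \<odot> graph (\<beta> * \<gamma>) (O_mult \<beta> \<gamma> u v))"
    by (simp only: ext_mult_assoc mult.assoc graph_mult_graph)
  finally show ?thesis
    by (simp only: O_act_right_eq_graph_proj)
qed

lemma O_mult_bilinear: "bilinear_map sM sM sM (O_mult \<alpha> \<beta>)"
  unfolding bilinear_map_def linear_iff O_mult_def
  by (simp add: A.vector_space_axioms M.vector_space_axioms bilinear_simps T_simps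
      M.scale_right_distrib algebra_simps)

lemma O_act_left_bilinear: "bilinear_map sM sA sA (O_act_left \<alpha> \<beta>)"
  unfolding bilinear_map_def linear_iff O_act_left_def
  by (simp add: A.vector_space_axioms M.vector_space_axioms bilinear_simps T_simps
      A.scale_right_diff_distrib algebra_simps)

lemma O_act_right_bilinear: "bilinear_map sA sM sA (O_act_right \<alpha> \<beta>)"
  unfolding bilinear_map_def linear_iff O_act_right_def
  by (simp add: A.vector_space_axioms M.vector_space_axioms bilinear_simps T_simps
      A.scale_right_diff_distrib algebra_simps)

lemma omega_assoc_algebra_O_mult: "omega_assoc_algebra sM O_mult"
  unfolding omega_assoc_algebra_def
  by (intro conjI allI M.vector_space_axioms O_mult_bilinear O_mult_assoc)

lemma omega_bimodule_O_act: "omega_bimodule sM O_mult sA O_act_left O_act_right"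
  unfolding omega_bimodule_def
  by (intro conjI allI A.vector_space_axioms O_act_left_bilinear O_act_right_bilinear
      O_act_left_O_mult O_act_right_O_act_left O_act_right_O_mult)

end

theorem theorem4p4:
  fixes sA :: "'k::field \<Rightarrow> 'a::ab_group_add \<Rightarrow> 'a"
    and mA :: "'a \<Rightarrow> 'a \<Rightarrow> 'a"
    and sM :: "'k \<Rightarrow> 'm::ab_group_add \<Rightarrow> 'm"
    and lM :: "'a \<Rightarrow> 'm \<Rightarrow> 'm"
    and rM :: "'m \<Rightarrow> 'a \<Rightarrow> 'm"
    and H :: "'a \<Rightarrow> 'a \<Rightarrow> 'm"
    and T :: "'o::semigroup_mult \<Rightarrow> 'm \<Rightarrow> 'a"
  assumes "assoc_algebra sA mA"
    and "alg_bimodule sA mA sM lM rM"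
    and "hochschild_2cocycle sA mA sM lM rM H"
    and "twisted_O_operator_family sA mA sM lM rM H T"
  shows "omega_assoc_algebra sM
           (\<lambda>\<alpha> \<beta> u v. lM (T \<alpha> u) v + rM u (T \<beta> v) + H (T \<alpha> u) (T \<beta> v))
       \<and> omega_bimodule sM
           (\<lambda>\<alpha> \<beta> u v. lM (T \<alpha> u) v + rM u (T \<beta> v) + H (T \<alpha> u) (T \<beta> v))
           sA
           (\<lambda>\<alpha> \<beta> u a. mA (T \<alpha> u) a - T (\<alpha> * \<beta>) (rM u a) - T (\<alpha> * \<beta>) (H (T \<alpha> u) a))
           (\<lambda>\<alpha> \<beta> a u. mA a (T \<beta> u) - T (\<alpha> * \<beta>) (lM a u) - T (\<alpha> * \<beta>) (H a (T \<beta> u)))"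
proof -
  interpret twisted_O_family sA mA sM lM rM H T
    using assms by unfold_locales
  show ?thesis
    using omega_assoc_algebra_O_mult omega_bimodule_O_act
    unfolding O_mult_def[abs_def] O_act_left_def[abs_def] O_act_right_def[abs_def] by blast
qed

end
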